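(* Let $\alpha\in(0,1)$ be irrational, let $$C_n=\prod_{t=1}^{q_n-1}\Big(1-\frac{s_{n0}^2}{s_{nt}^2}\Big)^{1/2},$$ and let $\kappa_n=\lfloor q_n^{1/2}\rfloor$. Then for sufficiently large $n$, $$C_n=\prod_{t=1}^{\kappa_n}\Big(1-\frac1{4(t/c_n-\xi_{nt})^2}\Big)+O(\kappa_n^{-1}).$$
   Context: Continued fraction notation: - $\alpha=[0;a_1,a_2,\ldots]$. - $q_0=0$, $q_1=1$, $q_{n+1}=a_nq_n+q_{n-1}$, and $p_0=1$, $p_1=0$, $p_{n+1}=a_np_n+p_{n-1}$. - $\Lambda_n=q_n\alpha-p_n$. - $c_n=1/(\alpha_n^++\alpha_n^-)$, where $\alpha_n^+=[a_n;a_{n+1},\ldots]$ and $\alpha_n^-=[0;a_{n-1},\ldots,a_1]$. Auxiliary quantities, for $t\in\{0,\ldots,q_n-1\}$: - $\xi_{nt}=\{tq_{n-1}/q_n\}-\frac12$; - $s_{nt}=2\sin\big(\pi[t/q_n-|\Lambda_n|\xi_{nt}]\big)$. The $O$-constant is independent of $n$. *)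

theory Defs
  imports Complex_Main
begin

text \<open>Continued fraction expansion alpha = [0; a_1, a_2, ...] via the Gauss map:
  x_0 = alpha, x_{k+1} = frac (1 / x_k), and a_n = floor (1 / x_{n-1}) for n >= 1.\<close>

fun cf_x :: "real \<Rightarrow> nat \<Rightarrow> real" where
  "cf_x \<alpha> 0 = \<alpha>"
| "cf_x \<alpha> (Suc k) = frac (1 / cf_x \<alpha> k)"

definition cf_a :: "real \<Rightarrow> nat \<Rightarrow> nat" where
  "cf_a \<alpha> n = nat \<lfloor>1 / cf_x \<alpha> (n - 1)\<rfloor>"

fun cf_q :: "real \<Rightarrow> nat \<Rightarrow> nat" where
  "cf_q \<alpha> 0 = 0"
| "cf_q \<alpha> (Suc 0) = 1"
| "cf_q \<alpha> (Suc (Suc n)) = cf_a \<alpha> (Suc n) * cf_q \<alpha> (Suc n) + cf_q \<alpha> n"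

fun cf_p :: "real \<Rightarrow> nat \<Rightarrow> nat" where
  "cf_p \<alpha> 0 = 1"
| "cf_p \<alpha> (Suc 0) = 0"
| "cf_p \<alpha> (Suc (Suc n)) = cf_a \<alpha> (Suc n) * cf_p \<alpha> (Suc n) + cf_p \<alpha> n"

definition cf_Lambda :: "real \<Rightarrow> nat \<Rightarrow> real" where
  "cf_Lambda \<alpha> n = real (cf_q \<alpha> n) * \<alpha> - real (cf_p \<alpha> n)"

fun cf_fin0 :: "nat list \<Rightarrow> real" where
  "cf_fin0 [] = 0"
| "cf_fin0 (b # bs) = 1 / (real b + cf_fin0 bs)"

text \<open>alpha_n^+ = [a_n; a_{n+1}, ...] (the complete quotient, = 1 / x_{n-1}),
  alpha_n^- = [0; a_{n-1}, ..., a_1].\<close>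

definition cf_alpha_plus :: "real \<Rightarrow> nat \<Rightarrow> real" where
  "cf_alpha_plus \<alpha> n = real (cf_a \<alpha> n) + cf_x \<alpha> n"

definition cf_alpha_minus :: "real \<Rightarrow> nat \<Rightarrow> real" where
  "cf_alpha_minus \<alpha> n = cf_fin0 (map (cf_a \<alpha>) (rev [1..<n]))"

definition cf_c :: "real \<Rightarrow> nat \<Rightarrow> real" where
  "cf_c \<alpha> n = 1 / (cf_alpha_plus \<alpha> n + cf_alpha_minus \<alpha> n)"

definition cf_xi :: "real \<Rightarrow> nat \<Rightarrow> nat \<Rightarrow> real" where
  "cf_xi \<alpha> n t = frac (real t * real (cf_q \<alpha> (n - 1)) / real (cf_q \<alpha> n)) - 1 / 2"

definition cf_s :: "real \<Rightarrow> nat \<Rightarrow> nat \<Rightarrow> real" where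
  "cf_s \<alpha> n t = 2 * sin (pi * (real t / real (cf_q \<alpha> n) - \<bar>cf_Lambda \<alpha> n\<bar> * cf_xi \<alpha> n t))"

definition cf_C :: "real \<Rightarrow> nat \<Rightarrow> real" where
  "cf_C \<alpha> n = (\<Prod>t = 1..cf_q \<alpha> n - 1. sqrt (1 - (cf_s \<alpha> n 0)\<^sup>2 / (cf_s \<alpha> n t)\<^sup>2))"

definition cf_kappa :: "real \<Rightarrow> nat \<Rightarrow> nat" where
  "cf_kappa \<alpha> n = nat \<lfloor>sqrt (real (cf_q \<alpha> n))\<rfloor>"

end

theory Submission
  imports Defs
begin

text \<open>Since q_n p_{n-1} - p_n q_{n-1} = +-1, the denominators q_n and q_{n-1} are coprime, so
  t q_{n-1} / q_n is never an integer for 0 < t < q_n. Hence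
  xi_{n,q_n-t} = -xi_{nt} and s_{n,q_n-t} = s_{nt}: the factors of C_n are symmetric, and C_n is
  the product of the factors with t <= kappa_n (each counted twice under the square root) times
  the square roots of the factors with kappa_n < t < q_n - kappa_n.

  Write s_{nt} = 2 sin (pi theta_t) with |theta_t - t/q_n| <= 1/(2 q_n). Each middle factor
  differs from 1 by O(t^-2 + (q_n - t)^-2), which sums to O(1/kappa_n). For t <= kappa_n all
  angles are O(q_n^{-1/2}), and sin x ~ x turns the factor into
  1 - (|Lambda_n|/2)^2 / theta_t^2 = 1 - 1 / (4 (t/c_n - xi_{nt})^2) up to O(q_n^-2), by the
  classical identity c_n = q_n |Lambda_n|; over kappa_n <= q_n^{1/2} factors this costs
  O(1/kappa_n) as well.\<close>

section \<open>Continued fractions\<close>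

lemma frac_inverse_not_rat:
  fixes x :: real
  assumes "x \<notin> \<rat>"
  shows "frac (1 / x) \<notin> \<rat>"
proof
  assume "frac (1 / x) \<in> \<rat>"
  then have "frac (1 / x) + of_int \<lfloor>1 / x\<rfloor> \<in> \<rat>" by (intro Rats_add Rats_of_int)
  then have "inverse x \<in> \<rat>" by (simp add: frac_def inverse_eq_divide)
  with assms show False by simp
qed

lemma cf_q_p_det:
  "int (cf_q \<alpha> (Suc m)) * int (cf_p \<alpha> m) - int (cf_p \<alpha> (Suc m)) * int (cf_q \<alpha> m) = (-1) ^ m"
  by (induction m) (simp_all add: algebra_simps)

lemma coprime_cf_q_Suc: "coprime (cf_q \<alpha> (Suc m)) (cf_q \<alpha> m)"
proof -
  have "coprime (int (cf_q \<alpha> (Suc m))) (int (cf_q \<alpha> m))"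
  proof (rule coprimeI)
    fix d assume "d dvd int (cf_q \<alpha> (Suc m))" "d dvd int (cf_q \<alpha> m)"
    then have "d dvd int (cf_q \<alpha> (Suc m)) * int (cf_p \<alpha> m) - int (cf_p \<alpha> (Suc m)) * int (cf_q \<alpha> m)"
      by (intro dvd_diff dvd_mult dvd_mult2)
    then show "is_unit d" unfolding cf_q_p_det by (rule dvd_unit_imp_unit) simp
  qed
  then show ?thesis by simp
qed

lemma abs_cf_xi_le: "\<bar>cf_xi \<alpha> n t\<bar> \<le> 1/2"
proof -
  have "0 \<le> frac (real t * real (cf_q \<alpha> (n - 1)) / real (cf_q \<alpha> n))"
    "frac (real t * real (cf_q \<alpha> (n - 1)) / real (cf_q \<alpha> n)) < 1" by (simp_all add: frac_lt_1)
  then show ?thesis unfolding cf_xi_def by linarith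
qed

lemma cf_xi_0: "cf_xi \<alpha> n 0 = - 1/2"
  by (simp add: cf_xi_def)

lemma cf_xi_reflect:
  assumes "0 < t" "t < cf_q \<alpha> (Suc m)"
  shows "cf_xi \<alpha> (Suc m) (cf_q \<alpha> (Suc m) - t) = - cf_xi \<alpha> (Suc m) t"
proof -
  define Q where "Q = cf_q \<alpha> (Suc m)"
  define a where "a = cf_q \<alpha> m"
  define y where "y = real t * real a / real Q"
  have "0 < Q" using assms Q_def by linarith
  have "y \<notin> \<int>"
  proof
    assume "y \<in> \<int>"
    then obtain k where "y = of_int k" by (metis Ints_cases)
    then have "of_int (int t * int a) = (of_int (int Q * k) :: real)"
      using \<open>0 < Q\<close> by (simp add: y_def field_simps)
    then have "int Q dvd int (t * a)" by (metis of_int_eq_iff dvd_triv_left of_nat_mult)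
    then have "Q dvd t"
      using coprime_cf_q_Suc[of \<alpha> m] by (simp add: Q_def a_def coprime_dvd_mult_left_iff)
    then show False using assms by (simp add: Q_def dvd_imp_le leD)
  qed
  have "real (Q - t) * real a / real Q = of_int (int a) + (- y)"
    using assms \<open>0 < Q\<close> by (simp add: y_def Q_def of_nat_diff field_simps)
  then have "frac (real (Q - t) * real a / real Q) = frac (- y)"
    by (simp only: frac_add_of_int_left)
  also have "\<dots> = 1 - frac y" using \<open>y \<notin> \<int>\<close> by (simp add: frac_neg)
  finally have "frac (real (Q - t) * real a / real Q) = 1 - frac y" .
  then show ?thesis by (simp add: cf_xi_def y_def Q_def a_def)
qed

locale irrational_in_unit =
  fixes \<alpha> :: real
  assumes pos: "0 < \<alpha>" and less_one: "\<alpha> < 1" and irrational: "\<alpha> \<notin> \<rat>"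
begin

lemma cf_x_in_unit: "0 < cf_x \<alpha> k \<and> cf_x \<alpha> k < 1 \<and> cf_x \<alpha> k \<notin> \<rat>"
proof (induction k)
  case 0
  then show ?case using pos less_one irrational by simp
next
  case (Suc k)
  then have "1 / cf_x \<alpha> k \<notin> \<rat>" by (simp flip: inverse_eq_divide)
  then have "1 / cf_x \<alpha> k \<notin> \<int>" using Ints_subset_Rats by blast
  then show ?case using Suc frac_inverse_not_rat[of "cf_x \<alpha> k"] by (simp add: frac_lt_1)
qed

lemma inverse_cf_x: "1 / cf_x \<alpha> k = real (cf_a \<alpha> (Suc k)) + cf_x \<alpha> (Suc k)"
proof -
  have "1 < 1 / cf_x \<alpha> k" using cf_x_in_unit[of k] by simp
  then have "0 \<le> \<lfloor>1 / cf_x \<alpha> k\<rfloor>" by linarith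
  then show ?thesis by (simp add: cf_a_def frac_def)
qed

lemma cf_a_ge_1: "1 \<le> cf_a \<alpha> n"
proof -
  have "1 < 1 / cf_x \<alpha> (n - 1)" using cf_x_in_unit[of "n - 1"] by simp
  then show ?thesis unfolding cf_a_def by linarith
qed

lemma cf_q_Suc_ge: "1 \<le> cf_q \<alpha> (Suc n) \<and> n \<le> cf_q \<alpha> (Suc n)"
proof (induction n rule: less_induct)
  case (less n)
  show ?case
  proof (cases n)
    case (Suc m)
    have "cf_q \<alpha> (Suc m) \<le> cf_a \<alpha> (Suc m) * cf_q \<alpha> (Suc m)"
      using cf_a_ge_1[of "Suc m"] by simp
    moreover have "1 \<le> cf_q \<alpha> (Suc m)" "m \<le> cf_q \<alpha> (Suc m)" using less Suc by auto
    moreover have "Suc m \<le> cf_q \<alpha> (Suc m) + cf_q \<alpha> m"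
      using less[of "m - 1"] Suc \<open>1 \<le> cf_q \<alpha> (Suc m)\<close> \<open>m \<le> cf_q \<alpha> (Suc m)\<close>
      by (cases m) auto
    ultimately show ?thesis unfolding Suc cf_q.simps by linarith
  qed simp
qed

lemma alpha_via_complete_quotient:
  "\<alpha> * (real (cf_q \<alpha> (Suc m)) / cf_x \<alpha> m + real (cf_q \<alpha> m))
     = real (cf_p \<alpha> (Suc m)) / cf_x \<alpha> m + real (cf_p \<alpha> m)"
proof (induction m)
  case 0
  then show ?case using pos by simp
next
  case (Suc m)
  have "\<alpha> * (real (cf_q \<alpha> (Suc m)) * (1 / cf_x \<alpha> m) + real (cf_q \<alpha> m))
      = real (cf_p \<alpha> (Suc m)) * (1 / cf_x \<alpha> m) + real (cf_p \<alpha> m)"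
    using Suc by simp
  then have "\<alpha> * (real (cf_q \<alpha> (Suc m)) * (cf_a \<alpha> (Suc m) + cf_x \<alpha> (Suc m)) + real (cf_q \<alpha> m))
      = real (cf_p \<alpha> (Suc m)) * (cf_a \<alpha> (Suc m) + cf_x \<alpha> (Suc m)) + real (cf_p \<alpha> m)"
    unfolding inverse_cf_x .
  then have "\<alpha> * (real (cf_q \<alpha> (Suc (Suc m))) + real (cf_q \<alpha> (Suc m)) * cf_x \<alpha> (Suc m))
      = real (cf_p \<alpha> (Suc (Suc m))) + real (cf_p \<alpha> (Suc m)) * cf_x \<alpha> (Suc m)"
    by (simp add: algebra_simps)
  moreover have "0 < cf_x \<alpha> (Suc m)" using cf_x_in_unit by blast
  ultimately show ?case by (simp add: field_simps)
qed

lemma abs_cf_Lambda_Suc: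
  "\<bar>cf_Lambda \<alpha> (Suc m)\<bar> = 1 / (real (cf_q \<alpha> (Suc m)) / cf_x \<alpha> m + real (cf_q \<alpha> m))"
proof -
  define x where "x = cf_x \<alpha> m"
  define D where "D = real (cf_q \<alpha> (Suc m)) / x + real (cf_q \<alpha> m)"
  have "0 < x" using cf_x_in_unit x_def by blast
  then have "0 < D" using cf_q_Suc_ge[of m] by (simp add: D_def add_pos_nonneg)
  have "cf_Lambda \<alpha> (Suc m) * D = real (cf_q \<alpha> (Suc m)) * (\<alpha> * D) - real (cf_p \<alpha> (Suc m)) * D"
    by (simp add: cf_Lambda_def algebra_simps)
  also have "\<dots> = real (cf_q \<alpha> (Suc m)) * real (cf_p \<alpha> m) - real (cf_p \<alpha> (Suc m)) * real (cf_q \<alpha> m)"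
    using alpha_via_complete_quotient[of m] by (simp add: D_def x_def algebra_simps)
  also have "\<dots> = (-1) ^ m"
    using arg_cong[OF cf_q_p_det[of \<alpha> m], of real_of_int] by simp
  finally have "\<bar>cf_Lambda \<alpha> (Suc m) * D\<bar> = 1" by simp
  then have "\<bar>cf_Lambda \<alpha> (Suc m)\<bar> * D = 1" using \<open>0 < D\<close> by (simp add: abs_mult)
  then show ?thesis using \<open>0 < D\<close> by (simp add: D_def x_def field_simps)
qed

lemma cf_alpha_minus_Suc: "cf_alpha_minus \<alpha> (Suc m) = real (cf_q \<alpha> m) / real (cf_q \<alpha> (Suc m))"
proof (induction m)
  case 0
  then show ?case by (simp add: cf_alpha_minus_def)
next
  case (Suc m)
  have "cf_alpha_minus \<alpha> (Suc (Suc m)) = 1 / (real (cf_a \<alpha> (Suc m)) + cf_alpha_minus \<alpha> (Suc m))"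
    by (simp add: cf_alpha_minus_def)
  then show ?case using Suc cf_q_Suc_ge[of m] by (simp add: field_simps)
qed

lemma cf_alpha_plus_Suc: "cf_alpha_plus \<alpha> (Suc m) = 1 / cf_x \<alpha> m"
  unfolding cf_alpha_plus_def inverse_cf_x ..

lemma cf_c_Suc_eq: "cf_c \<alpha> (Suc m) = real (cf_q \<alpha> (Suc m)) * \<bar>cf_Lambda \<alpha> (Suc m)\<bar>"
proof -
  define x where "x = cf_x \<alpha> m"
  have "0 < x" "1 \<le> real (cf_q \<alpha> (Suc m))" using cf_x_in_unit cf_q_Suc_ge x_def by auto
  have "cf_c \<alpha> (Suc m) = 1 / (1 / x + real (cf_q \<alpha> m) / real (cf_q \<alpha> (Suc m)))"
    by (simp add: cf_c_def cf_alpha_plus_Suc cf_alpha_minus_Suc x_def)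
  also have "\<dots> = real (cf_q \<alpha> (Suc m)) / (real (cf_q \<alpha> (Suc m)) / x + real (cf_q \<alpha> m))"
    using \<open>0 < x\<close> \<open>1 \<le> real (cf_q \<alpha> (Suc m))\<close> by (simp add: field_simps)
  finally show ?thesis by (simp add: abs_cf_Lambda_Suc x_def)
qed

lemma cf_c_Suc_less_1: "cf_c \<alpha> (Suc m) < 1"
proof -
  have "1 < 1 / cf_x \<alpha> m" using cf_x_in_unit[of m] by simp
  moreover have "0 \<le> real (cf_q \<alpha> m) / real (cf_q \<alpha> (Suc m))" by simp
  ultimately have "1 < cf_alpha_plus \<alpha> (Suc m) + cf_alpha_minus \<alpha> (Suc m)"
    unfolding cf_alpha_plus_Suc cf_alpha_minus_Suc by linarith
  then show ?thesis by (simp add: cf_c_def)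
qed

lemma abs_cf_Lambda_Suc_pos: "0 < \<bar>cf_Lambda \<alpha> (Suc m)\<bar>"
  using cf_x_in_unit[of m] cf_q_Suc_ge[of m] by (simp add: abs_cf_Lambda_Suc add_pos_nonneg)

end

section \<open>Elementary estimates\<close>

lemma cos_ge_1_minus_sq_half: "1 - x\<^sup>2 / 2 \<le> cos (x::real)"
proof -
  have "(sin (x/2))\<^sup>2 \<le> (x/2)\<^sup>2"
    using abs_sin_x_le_abs_x[of "x/2"] by (metis abs_le_square_iff)
  then show ?thesis using cos_double_sin[of "x/2"] by (simp add: power_divide)
qed

lemma sin_ge_cubic:
  fixes x :: real
  assumes "0 \<le> x"
  shows "x - x ^ 3 / 6 \<le> sin x"
proof -
  let ?f = "\<lambda>x. sin x - x + x ^ 3 / 6"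
  have "(?f has_real_derivative cos y - 1 + y\<^sup>2 / 2) (at y)" for y :: real
    by (auto intro!: derivative_eq_intros simp: power2_eq_square)
  moreover have "0 \<le> cos y - 1 + y\<^sup>2 / 2" for y :: real
    using cos_ge_1_minus_sq_half[of y] by linarith
  ultimately have "?f 0 \<le> ?f x"
    by (intro DERIV_nonneg_imp_nondecreasing[OF assms]) blast
  then show ?thesis by simp
qed

lemma sin_ge_third:
  fixes x :: real
  assumes "0 \<le> x" "x \<le> 2"
  shows "x / 3 \<le> sin x"
proof -
  have "x * x \<le> 2 * 2" using assms by (intro mult_mono) auto
  then have "x ^ 3 \<le> 4 * x" using assms by (simp add: power3_eq_cube mult_right_mono)
  then show ?thesis using sin_ge_cubic[OF assms(1)] by simp
qed

lemma abs_prod_diff_le_sum: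
  fixes f g :: "'a \<Rightarrow> real"
  assumes "finite A" "\<And>x. x \<in> A \<Longrightarrow> 0 \<le> f x \<and> f x \<le> 1 \<and> 0 \<le> g x \<and> g x \<le> 1"
  shows "\<bar>prod f A - prod g A\<bar> \<le> (\<Sum>x\<in>A. \<bar>f x - g x\<bar>)"
  using assms
proof (induction A rule: finite_induct)
  case (insert a A)
  have "0 \<le> prod f A" "prod f A \<le> 1" "0 \<le> g a" "g a \<le> 1"
    using insert by (auto intro: prod_nonneg prod_le_1)
  have "\<bar>f a * prod f A - g a * prod g A\<bar> = \<bar>(f a - g a) * prod f A + g a * (prod f A - prod g A)\<bar>"
    by (simp add: algebra_simps)
  also have "\<dots> \<le> \<bar>f a - g a\<bar> * prod f A + g a * \<bar>prod f A - prod g A\<bar>"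
    using abs_triangle_ineq \<open>0 \<le> prod f A\<close> \<open>0 \<le> g a\<close> by (metis abs_mult abs_of_nonneg)
  also have "\<dots> \<le> \<bar>f a - g a\<bar> + \<bar>prod f A - prod g A\<bar>"
    using \<open>prod f A \<le> 1\<close> \<open>0 \<le> g a\<close> \<open>g a \<le> 1\<close>
    by (intro add_mono mult_left_le mult_left_le_one_le) auto
  finally show ?case using insert by simp
qed simp

lemma sum_inverse_square_le:
  assumes "1 \<le> a" "a \<le> b"
  shows "(\<Sum>t = Suc a..b. 1 / (real t)\<^sup>2) \<le> 1 / real a - 1 / real b"
  using assms(2)
proof (induction b rule: dec_induct)
  case (step b)
  have "1 \<le> real b" using assms step by simp
  then have "1 / (real (Suc b))\<^sup>2 \<le> 1 / (real b * real (Suc b))"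
    by (intro divide_left_mono) (auto simp: power2_eq_square)
  also have "\<dots> = 1 / real b - 1 / real (Suc b)"
    using \<open>1 \<le> real b\<close> by (simp add: field_simps)
  finally show ?case using step by simp
qed simp

lemma sin_ratio_bounds:
  fixes u v :: real
  assumes "0 < u" "u \<le> v" "v \<le> 1"
  shows "u / v * (1 - u\<^sup>2 / 6) \<le> sin u / sin v" "sin u / sin v \<le> u / v * (1 + v\<^sup>2 / 5)"
proof -
  have "u\<^sup>2 \<le> 1" "v\<^sup>2 \<le> 1" using assms by (simp_all add: power_le_one)
  have sin_u: "u * (1 - u\<^sup>2 / 6) \<le> sin u" "sin u \<le> u"
    using sin_ge_cubic[of u] sin_x_le_x[of u] assms
    by (simp_all add: algebra_simps power2_eq_square power3_eq_cube)
  have sin_v: "v * (1 - v\<^sup>2 / 6) \<le> sin v" "sin v \<le> v"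
    using sin_ge_cubic[of v] sin_x_le_x[of v] assms
    by (simp_all add: algebra_simps power2_eq_square power3_eq_cube)
  have "0 < u * (1 - u\<^sup>2 / 6)" "0 < v * (1 - v\<^sup>2 / 6)"
    using assms \<open>u\<^sup>2 \<le> 1\<close> \<open>v\<^sup>2 \<le> 1\<close> by simp_all
  show "u / v * (1 - u\<^sup>2 / 6) \<le> sin u / sin v"
    using frac_le[of "sin u" "u * (1 - u\<^sup>2 / 6)" "sin v" v] sin_u sin_v \<open>0 < u * (1 - u\<^sup>2 / 6)\<close>
      \<open>0 < v * (1 - v\<^sup>2 / 6)\<close> by simp
  have "1 \<le> (1 - v\<^sup>2 / 6) * (1 + v\<^sup>2 / 5)"
    using mult_left_le[OF \<open>v\<^sup>2 \<le> 1\<close>, of "v\<^sup>2"] by (simp add: algebra_simps)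
  then have "u / (v * (1 - v\<^sup>2 / 6)) \<le> u / v * (1 + v\<^sup>2 / 5)"
    using assms \<open>0 < v * (1 - v\<^sup>2 / 6)\<close> by (simp add: field_simps)
  moreover have "sin u / sin v \<le> u / (v * (1 - v\<^sup>2 / 6))"
    using frac_le[of u "sin u" "v * (1 - v\<^sup>2 / 6)" "sin v"] sin_u sin_v assms
      \<open>0 < u * (1 - u\<^sup>2 / 6)\<close> \<open>0 < v * (1 - v\<^sup>2 / 6)\<close> by simp
  ultimately show "sin u / sin v \<le> u / v * (1 + v\<^sup>2 / 5)" by linarith
qed

lemma sin_sq_ratio_approx:
  fixes u v :: real
  assumes "0 < u" "u \<le> v" "v \<le> 1"
  shows "\<bar>(sin u / sin v)\<^sup>2 - (u / v)\<^sup>2\<bar> \<le> u\<^sup>2"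
proof -
  define \<rho> where "\<rho> = u / v"
  have "0 < \<rho>" "\<rho> \<le> 1" "\<rho> * v = u" using assms by (auto simp: \<rho>_def)
  have "u\<^sup>2 \<le> 1" "v\<^sup>2 \<le> 1" using assms by (simp_all add: power_le_one)
  note bounds = sin_ratio_bounds[OF assms, folded \<rho>_def]
  have "0 \<le> \<rho> * (1 - u\<^sup>2 / 6)" using \<open>0 < \<rho>\<close> \<open>u\<^sup>2 \<le> 1\<close> by simp
  have "(sin u / sin v)\<^sup>2 \<le> (\<rho> * (1 + v\<^sup>2 / 5))\<^sup>2"
    using bounds \<open>0 \<le> \<rho> * (1 - u\<^sup>2 / 6)\<close> by (intro power_mono) auto
  also have "\<dots> = \<rho>\<^sup>2 + (\<rho> * v)\<^sup>2 * (2/5 + v\<^sup>2 / 25)" by (simp add: algebra_simps power2_eq_square)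
  also have "\<dots> \<le> \<rho>\<^sup>2 + u\<^sup>2"
    using \<open>v\<^sup>2 \<le> 1\<close> \<open>\<rho> * v = u\<close> mult_left_le[of "2/5 + v\<^sup>2 / 25" "u\<^sup>2"] by simp
  finally have upper: "(sin u / sin v)\<^sup>2 - \<rho>\<^sup>2 \<le> u\<^sup>2" by simp
  have "\<rho>\<^sup>2 - \<rho>\<^sup>2 * u\<^sup>2 * (1/3 - u\<^sup>2 / 36) = (\<rho> * (1 - u\<^sup>2 / 6))\<^sup>2"
    by (simp add: algebra_simps power2_eq_square)
  also have "\<dots> \<le> (sin u / sin v)\<^sup>2"
    using bounds \<open>0 \<le> \<rho> * (1 - u\<^sup>2 / 6)\<close> by (intro power_mono) auto
  finally have "\<rho>\<^sup>2 - (sin u / sin v)\<^sup>2 \<le> \<rho>\<^sup>2 * u\<^sup>2 * (1/3 - u\<^sup>2 / 36)" by simp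
  also have "\<dots> \<le> 1 * u\<^sup>2 * 1"
  proof -
    have "1/3 - u\<^sup>2 / 36 \<le> 1" using zero_le_power2[of u] by linarith
    then show ?thesis using \<open>0 < \<rho>\<close> \<open>\<rho> \<le> 1\<close> \<open>u\<^sup>2 \<le> 1\<close>
      by (intro mult_mono) (auto simp: power_le_one)
  qed
  finally have lower: "\<rho>\<^sup>2 - (sin u / sin v)\<^sup>2 \<le> u\<^sup>2" by simp
  from upper lower show ?thesis by (simp add: \<rho>_def abs_le_iff)
qed

lemma sin_ratio_le:
  fixes q L m \<phi> :: real
  assumes "0 < q" "0 < L" "L * q < 1" "1 \<le> m" "m / (2 * q) \<le> \<phi>" "\<phi> \<le> 1/2"
  shows "0 < sin (pi * L / 2)" "sin (pi * L / 2) < sin (pi * \<phi>)"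
    and "(sin (pi * L / 2) / sin (pi * \<phi>))\<^sup>2 \<le> 9 / m\<^sup>2"
proof -
  have "L * q < m" using assms by linarith
  then have "L / 2 < m / (2 * q)" using assms by (simp add: field_simps)
  then have "pi * L / 2 < pi * \<phi>" using assms by simp
  have "0 < pi * L" using assms by simp
  then have "0 < pi * L / 2" by simp
  have "pi * \<phi> \<le> pi / 2" using assms by simp
  show "0 < sin (pi * L / 2)"
    using \<open>0 < pi * L / 2\<close> \<open>pi * L / 2 < pi * \<phi>\<close> \<open>pi * \<phi> \<le> pi / 2\<close>
    by (intro sin_gt_zero) simp_all
  show "sin (pi * L / 2) < sin (pi * \<phi>)"
    using \<open>0 < pi * L / 2\<close> \<open>pi * L / 2 < pi * \<phi>\<close> \<open>pi * \<phi> \<le> pi / 2\<close>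
    by (intro sin_monotone_2pi) (use pi_gt_zero in linarith)+
  have "pi * (m / (2 * q)) \<le> pi * \<phi>" by (rule mult_left_mono[OF assms(5)]) simp
  moreover have "pi * \<phi> \<le> 2" using \<open>pi * \<phi> \<le> pi / 2\<close> pi_less_4 by linarith
  ultimately have "pi * m / (6 * q) \<le> sin (pi * \<phi>)"
    using sin_ge_third[of "pi * \<phi>"] \<open>0 < pi * L / 2\<close> \<open>pi * L / 2 < pi * \<phi>\<close> by simp
  moreover have "sin (pi * L / 2) \<le> pi * L / 2" using \<open>0 < pi * L / 2\<close> by (intro sin_x_le_x) simp
  moreover have "0 < pi * m / (6 * q)" using assms by simp
  ultimately have "sin (pi * L / 2) / sin (pi * \<phi>) \<le> (pi * L / 2) / (pi * m / (6 * q))"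
    using \<open>0 < sin (pi * L / 2)\<close> by (intro frac_le) auto
  also have "\<dots> = 3 * (L * q) / m" using assms by (simp add: field_simps)
  also have "\<dots> \<le> 3 / m" using assms by (simp add: divide_right_mono)
  finally have "(sin (pi * L / 2) / sin (pi * \<phi>))\<^sup>2 \<le> (3 / m)\<^sup>2"
    using \<open>0 < sin (pi * L / 2)\<close> \<open>sin (pi * L / 2) < sin (pi * \<phi>)\<close> by (intro power_mono) auto
  then show "(sin (pi * L / 2) / sin (pi * \<phi>))\<^sup>2 \<le> 9 / m\<^sup>2" by (simp add: power_divide)
qed

lemma prod_reflect_split:
  fixes f :: "nat \<Rightarrow> 'a::comm_monoid_mult"
  assumes "2 * k < q" "\<And>t. 0 < t \<Longrightarrow> t < q \<Longrightarrow> f (q - t) = f t"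
  shows "(\<Prod>t = 1..q - 1. f t) = (\<Prod>t = 1..k. f t)\<^sup>2 * (\<Prod>t = Suc k..q - Suc k. f t)"
proof -
  have "(\<Prod>t = q - k..q - 1. f t) = (\<Prod>t = 1..k. f t)"
    using assms by (intro prod.reindex_bij_witness[of _ "\<lambda>t. q - t" "\<lambda>t. q - t"]) auto
  moreover have "{1..q - 1} = {1..k} \<union> ({Suc k..q - Suc k} \<union> {q - k..q - 1})"
    using assms by auto
  moreover have "(\<Prod>t \<in> {1..k} \<union> ({Suc k..q - Suc k} \<union> {q - k..q - 1}). f t)
      = (\<Prod>t = 1..k. f t) * ((\<Prod>t = Suc k..q - Suc k. f t) * (\<Prod>t = q - k..q - 1. f t))"
    using assms by (subst prod.union_disjoint; auto)+
  ultimately show ?thesis by (simp add: power2_eq_square algebra_simps)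
qed

lemma nat_floor_sqrt_sq_le:
  assumes "0 \<le> x"
  shows "(real (nat \<lfloor>sqrt x\<rfloor>))\<^sup>2 \<le> x"
proof -
  have "real (nat \<lfloor>sqrt x\<rfloor>) \<le> sqrt x" using assms by simp
  then have "(real (nat \<lfloor>sqrt x\<rfloor>))\<^sup>2 \<le> (sqrt x)\<^sup>2" by (intro power_mono) auto
  then show ?thesis using assms by simp
qed

lemma le_nat_floor_sqrt:
  assumes "(real m)\<^sup>2 \<le> x"
  shows "m \<le> nat \<lfloor>sqrt x\<rfloor>"
proof -
  have "real m \<le> sqrt x" using assms real_le_rsqrt by blast
  then have "int m \<le> \<lfloor>sqrt x\<rfloor>" by (simp add: le_floor_iff)
  then show ?thesis by linarith
qed

section \<open>Products of sine ratios\<close>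

text \<open>For the theorem, q = q_n, L = |Lambda_n| and xi = xi_{n.}; then s_{nt} = 2 sin (pi phase t)
  and c_n = q L, so factor and approx_factor are the factors of C_n^2 and of the claimed product.\<close>

locale sine_ratio_product =
  fixes q :: nat and L :: real and \<xi> :: "nat \<Rightarrow> real"
  assumes q_pos: "0 < q" and L_pos: "0 < L" and qL_less_1: "real q * L < 1"
    and abs_xi_le: "\<bar>\<xi> t\<bar> \<le> 1/2" and xi_0: "\<xi> 0 = - 1/2"
    and xi_reflect: "0 < t \<Longrightarrow> t < q \<Longrightarrow> \<xi> (q - t) = - \<xi> t"
begin

definition phase :: "nat \<Rightarrow> real" where
  "phase t = real t / real q - L * \<xi> t"

definition factor :: "nat \<Rightarrow> real" where
  "factor t = 1 - (sin (pi * phase 0) / sin (pi * phase t))\<^sup>2"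

definition approx_factor :: "nat \<Rightarrow> real" where
  "approx_factor t = 1 - 1 / (4 * (real t / (real q * L) - \<xi> t)\<^sup>2)"

lemma phase_0: "phase 0 = L / 2"
  by (simp add: phase_def xi_0)

lemma L_less_inverse_q: "L < 1 / real q"
  using qL_less_1 q_pos by (simp add: field_simps)

lemma phase_bounds: "(real t - 1/2) / real q \<le> phase t" "phase t \<le> (real t + 1/2) / real q"
proof -
  have "\<bar>L * \<xi> t\<bar> \<le> L / 2" using abs_xi_le[of t] L_pos by (simp add: abs_mult)
  moreover have "L / 2 < (1/2) / real q" using L_less_inverse_q by simp
  ultimately show "(real t - 1/2) / real q \<le> phase t" "phase t \<le> (real t + 1/2) / real q"
    by (simp_all add: phase_def diff_divide_distrib add_divide_distrib abs_le_iff)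
qed

lemma phase_reflect: "0 < t \<Longrightarrow> t < q \<Longrightarrow> phase (q - t) = 1 - phase t"
  using q_pos by (simp add: phase_def xi_reflect of_nat_diff field_simps)

lemma factor_reflect: "0 < t \<Longrightarrow> t < q \<Longrightarrow> factor (q - t) = factor t"
  by (simp add: factor_def phase_reflect right_diff_distrib)

lemma sin_phase_ratio_le:
  assumes "1 \<le> t" "t < q"
  shows "0 < sin (pi * phase 0)" "sin (pi * phase 0) < sin (pi * phase t)"
    and "(sin (pi * phase 0) / sin (pi * phase t))\<^sup>2 \<le> 9 / (real t)\<^sup>2 + 9 / (real (q - t))\<^sup>2"
proof -
  have "L * real q < 1" using qL_less_1 by (simp add: mult.commute)
  have "0 < real q" using q_pos by simp
  have sin_0: "sin (pi * phase 0) = sin (pi * L / 2)" by (simp add: phase_0)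
  have "0 \<le> 9 / (real t)\<^sup>2" "0 \<le> 9 / (real (q - t))\<^sup>2" by simp_all
  have "0 < sin (pi * phase 0) \<and> sin (pi * phase 0) < sin (pi * phase t) \<and>
      (sin (pi * phase 0) / sin (pi * phase t))\<^sup>2 \<le> 9 / (real t)\<^sup>2 + 9 / (real (q - t))\<^sup>2"
  proof (cases "phase t \<le> 1/2")
    case True
    have "(real t / 2) / real q \<le> (real t - 1/2) / real q"
      using assms \<open>0 < real q\<close> by (intro divide_right_mono) auto
    then have "real t / (2 * real q) \<le> phase t" using phase_bounds(1)[of t] by simp
    then show ?thesis
      using sin_ratio_le[OF \<open>0 < real q\<close> L_pos \<open>L * real q < 1\<close> _ _ True, of "real t"] assms
        \<open>0 \<le> 9 / (real (q - t))\<^sup>2\<close>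
      unfolding sin_0 by linarith
  next
    case False
    have "(real (q - t) / 2) / real q \<le> (real (q - t) - 1/2) / real q"
      using assms \<open>0 < real q\<close> by (intro divide_right_mono) auto
    also have "\<dots> = 1 - (real t + 1/2) / real q"
      using assms \<open>0 < real q\<close> by (simp add: of_nat_diff field_simps)
    finally have "real (q - t) / (2 * real q) \<le> 1 - phase t" using phase_bounds(2)[of t] by simp
    moreover have "1 \<le> real (q - t)" "1 - phase t \<le> 1/2" using assms False by auto
    moreover have "sin (pi * (1 - phase t)) = sin (pi * phase t)"
      by (simp add: right_diff_distrib)
    ultimately have "0 < sin (pi * L / 2)" "sin (pi * L / 2) < sin (pi * phase t)"
      "(sin (pi * L / 2) / sin (pi * phase t))\<^sup>2 \<le> 9 / (real (q - t))\<^sup>2"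
      using sin_ratio_le[OF \<open>0 < real q\<close> L_pos \<open>L * real q < 1\<close>, of "real (q - t)" "1 - phase t"]
      by simp_all
    then show ?thesis using \<open>0 \<le> 9 / (real t)\<^sup>2\<close> unfolding sin_0 by linarith
  qed
  then show "0 < sin (pi * phase 0)" "sin (pi * phase 0) < sin (pi * phase t)"
    "(sin (pi * phase 0) / sin (pi * phase t))\<^sup>2 \<le> 9 / (real t)\<^sup>2 + 9 / (real (q - t))\<^sup>2"
    by auto
qed

lemma factor_in_unit:
  assumes "1 \<le> t" "t < q"
  shows "0 \<le> factor t" "factor t \<le> 1"
proof -
  note r = sin_phase_ratio_le[OF assms]
  have "0 < sin (pi * phase 0) / sin (pi * phase t)" "sin (pi * phase 0) / sin (pi * phase t) < 1"
    using r(1,2) by simp_all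
  then have "(sin (pi * phase 0) / sin (pi * phase t))\<^sup>2 \<le> 1" by (simp add: power_le_one)
  then show "0 \<le> factor t" "factor t \<le> 1" by (simp_all add: factor_def)
qed

lemma one_minus_factor_le:
  assumes "1 \<le> t" "t < q"
  shows "1 - factor t \<le> 9 / (real t)\<^sup>2 + 9 / (real (q - t))\<^sup>2"
  using sin_phase_ratio_le(3)[OF assms] by (simp add: factor_def)

lemma approx_factor_in_unit:
  assumes "1 \<le> t"
  shows "0 \<le> approx_factor t" "approx_factor t \<le> 1"
proof -
  have "real t \<le> real t / (real q * L)"
    using assms q_pos L_pos qL_less_1 by (simp add: le_divide_eq)
  moreover have "\<xi> t \<le> 1/2" using abs_xi_le[of t] by simp
  ultimately have "1/2 \<le> real t / (real q * L) - \<xi> t" using assms by linarith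
  then have "(1/2)\<^sup>2 \<le> (real t / (real q * L) - \<xi> t)\<^sup>2" by (rule power_mono) simp
  then have "1 \<le> 4 * (real t / (real q * L) - \<xi> t)\<^sup>2" by (simp add: power_divide)
  then have "1 / (4 * (real t / (real q * L) - \<xi> t)\<^sup>2) \<le> 1" by (simp add: divide_le_eq_1)
  then show "0 \<le> approx_factor t" "approx_factor t \<le> 1" by (simp_all add: approx_factor_def)
qed

lemma abs_factor_diff_le:
  assumes "1 \<le> t" "4 * t + 2 \<le> q"
  shows "\<bar>factor t - approx_factor t\<bar> \<le> 4 / (real q)\<^sup>2"
proof -
  define u where "u = pi * phase 0"
  define v where "v = pi * phase t"
  have "0 < real q" using q_pos by simp
  have "(1/2) / real q \<le> (real t - 1/2) / real q"
    using assms \<open>0 < real q\<close> by (intro divide_right_mono) auto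
  then have "L / 2 \<le> phase t" using phase_bounds(1)[of t] L_less_inverse_q by simp
  then have "0 < u" "u \<le> v" by (simp_all add: u_def v_def phase_0 L_pos)
  have "v \<le> 4 * ((real t + 1/2) / real q)"
    using phase_bounds(2)[of t] pi_less_4 \<open>L / 2 \<le> phase t\<close> L_pos unfolding v_def
    by (intro mult_mono) auto
  also have "\<dots> \<le> 1" using assms \<open>0 < real q\<close> by (simp add: field_simps)
  finally have "v \<le> 1" .
  have "approx_factor t = 1 - (u / v)\<^sup>2"
  proof -
    have shift: "real t / (real q * L) - \<xi> t = phase t / L"
      using L_pos \<open>0 < real q\<close> by (simp add: phase_def field_simps)
    have "0 < phase t" using L_pos \<open>L / 2 \<le> phase t\<close> by linarith
    then show ?thesis
      using L_pos unfolding approx_factor_def shift u_def v_def phase_0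
      by (simp add: power_divide power_mult_distrib field_simps)
  qed
  moreover have "factor t = 1 - (sin u / sin v)\<^sup>2" by (simp add: factor_def u_def v_def)
  moreover have "u\<^sup>2 \<le> (2 / real q)\<^sup>2"
  proof -
    have "pi * L \<le> 4 * L" using pi_less_4 L_pos by (intro mult_right_mono) auto
    moreover have "4 * L \<le> 4 / real q" using L_less_inverse_q by simp
    ultimately have "u \<le> 2 / real q" by (simp add: u_def phase_0)
    then show ?thesis using \<open>0 < u\<close> by (intro power_mono) auto
  qed
  ultimately show ?thesis
    using sin_sq_ratio_approx[OF \<open>0 < u\<close> \<open>u \<le> v\<close> \<open>v \<le> 1\<close>] by (simp add: power_divide)
qed

lemma abs_prod_factor_diff_le:
  assumes "(real k)\<^sup>2 \<le> real q" "4 * k + 2 \<le> q"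
  shows "\<bar>(\<Prod>t = 1..k. factor t) - (\<Prod>t = 1..k. approx_factor t)\<bar> \<le> 4 / real k"
proof -
  have "\<bar>(\<Prod>t = 1..k. factor t) - (\<Prod>t = 1..k. approx_factor t)\<bar>
      \<le> (\<Sum>t = 1..k. \<bar>factor t - approx_factor t\<bar>)"
    using assms factor_in_unit approx_factor_in_unit by (intro abs_prod_diff_le_sum) auto
  also have "\<dots> \<le> (\<Sum>t = 1..k. 4 / (real q)\<^sup>2)"
    using assms by (intro sum_mono abs_factor_diff_le) auto
  also have "\<dots> = real k * 4 / (real q)\<^sup>2" by simp
  also have "\<dots> \<le> 4 / real k"
  proof (cases "k = 0")
    case False
    have "real q \<le> (real q)\<^sup>2" using q_pos by (simp add: power2_eq_square)
    then have "(real k)\<^sup>2 \<le> (real q)\<^sup>2" using assms(1) by linarith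
    then show ?thesis using False q_pos by (simp add: field_simps power2_eq_square)
  qed simp
  finally show ?thesis .
qed

lemma prod_sqrt_factor_middle_ge:
  assumes "1 \<le> k" "2 * k < q"
  shows "1 - 18 / real k \<le> (\<Prod>t = Suc k..q - Suc k. sqrt (factor t))"
proof -
  let ?I = "{Suc k..q - Suc k}"
  have t_range: "1 \<le> t" "t < q" if "t \<in> ?I" for t using that assms by auto
  have term_le: "\<bar>1 - sqrt (factor t)\<bar> \<le> 9 / (real t)\<^sup>2 + 9 / (real (q - t))\<^sup>2" if "t \<in> ?I" for t
  proof -
    have "0 \<le> factor t" "sqrt (factor t) \<le> 1" using factor_in_unit[OF t_range[OF that]] by simp_all
    then have "sqrt (factor t) * sqrt (factor t) \<le> sqrt (factor t)" by (intro mult_left_le) auto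
    then have "factor t \<le> sqrt (factor t)" using \<open>0 \<le> factor t\<close> by simp
    then show ?thesis using one_minus_factor_le[OF t_range[OF that]] \<open>sqrt (factor t) \<le> 1\<close> by simp
  qed
  have reflect: "(\<Sum>t\<in>?I. 1 / (real (q - t))\<^sup>2) = (\<Sum>t\<in>?I. 1 / (real t)\<^sup>2)"
    using assms by (subst sum.atLeastAtMost_rev) (intro sum.cong; auto)
  have "(\<Sum>t\<in>?I. 1 / (real t)\<^sup>2) \<le> 1 / real k - 1 / real (q - Suc k)"
    using assms by (intro sum_inverse_square_le) auto
  moreover have "0 \<le> 1 / real (q - Suc k)" by simp
  ultimately have harmonic: "(\<Sum>t\<in>?I. 1 / (real t)\<^sup>2) \<le> 1 / real k" by (smt (verit))
  have "1 - (\<Prod>t\<in>?I. sqrt (factor t)) \<le> \<bar>(\<Prod>t\<in>?I. 1) - (\<Prod>t\<in>?I. sqrt (factor t))\<bar>"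
    by simp
  also have "\<dots> \<le> (\<Sum>t\<in>?I. \<bar>1 - sqrt (factor t)\<bar>)"
    using factor_in_unit t_range by (intro abs_prod_diff_le_sum) auto
  also have "\<dots> \<le> (\<Sum>t\<in>?I. 9 / (real t)\<^sup>2 + 9 / (real (q - t))\<^sup>2)"
    using term_le by (intro sum_mono)
  also have "\<dots> = 9 * (\<Sum>t\<in>?I. 1 / (real t)\<^sup>2) + 9 * (\<Sum>t\<in>?I. 1 / (real (q - t))\<^sup>2)"
    by (simp add: sum.distrib sum_distrib_left)
  also have "\<dots> \<le> 18 / real k" unfolding reflect using harmonic by simp
  finally show ?thesis by simp
qed

theorem abs_prod_sqrt_factor_diff_le:
  assumes "64 \<le> q"
  defines "\<kappa> \<equiv> nat \<lfloor>sqrt (real q)\<rfloor>"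
  shows "\<bar>(\<Prod>t = 1..q - 1. sqrt (factor t)) - (\<Prod>t = 1..\<kappa>. approx_factor t)\<bar> \<le> 22 / real \<kappa>"
proof -
  have "8 \<le> \<kappa>" unfolding \<kappa>_def using assms by (intro le_nat_floor_sqrt) simp
  have "(real \<kappa>)\<^sup>2 \<le> real q" unfolding \<kappa>_def by (intro nat_floor_sqrt_sq_le) simp
  moreover have "8 * real \<kappa> \<le> (real \<kappa>)\<^sup>2"
    using \<open>8 \<le> \<kappa>\<close> by (simp add: power2_eq_square mult_right_mono)
  ultimately have "4 * \<kappa> + 2 \<le> q" "2 * \<kappa> < q" using \<open>8 \<le> \<kappa>\<close> by linarith+
  define X where "X = (\<Prod>t = 1..\<kappa>. factor t)"
  define Y where "Y = (\<Prod>t = Suc \<kappa>..q - Suc \<kappa>. sqrt (factor t))"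
  define Z where "Z = (\<Prod>t = 1..\<kappa>. approx_factor t)"
  have "(\<Prod>t = 1..q - 1. sqrt (factor t)) = (\<Prod>t = 1..\<kappa>. sqrt (factor t))\<^sup>2 * Y"
    unfolding Y_def using \<open>2 * \<kappa> < q\<close> factor_reflect by (intro prod_reflect_split) auto
  also have "(\<Prod>t = 1..\<kappa>. sqrt (factor t))\<^sup>2 = X"
    unfolding X_def prod_power_distrib using \<open>2 * \<kappa> < q\<close> factor_in_unit
    by (intro prod.cong) auto
  finally have split: "(\<Prod>t = 1..q - 1. sqrt (factor t)) = X * Y" .
  have "0 \<le> X" "X \<le> 1" "0 \<le> Y" "Y \<le> 1"
    unfolding X_def Y_def using \<open>2 * \<kappa> < q\<close> factor_in_unit
    by (auto intro!: prod_nonneg prod_le_1)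
  have "X * Y - Z = (X - Z) - X * (1 - Y)" by (simp add: algebra_simps)
  moreover have "0 \<le> X * (1 - Y)" using \<open>0 \<le> X\<close> \<open>Y \<le> 1\<close> by simp
  ultimately have "\<bar>X * Y - Z\<bar> \<le> X * (1 - Y) + \<bar>X - Z\<bar>" by linarith
  also have "\<dots> \<le> (1 - Y) + \<bar>X - Z\<bar>"
    using \<open>X \<le> 1\<close> \<open>Y \<le> 1\<close> mult_left_le_one_le[of "1 - Y" X] \<open>0 \<le> X\<close> by simp
  also have "\<dots> \<le> 18 / real \<kappa> + 4 / real \<kappa>"
    using prod_sqrt_factor_middle_ge[of \<kappa>] abs_prod_factor_diff_le[of \<kappa>]
      \<open>(real \<kappa>)\<^sup>2 \<le> real q\<close> \<open>4 * \<kappa> + 2 \<le> q\<close> \<open>2 * \<kappa> < q\<close> \<open>8 \<le> \<kappa>\<close>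
    unfolding X_def Y_def Z_def by (intro add_mono) auto
  finally show ?thesis unfolding split Z_def by simp
qed

end

theorem lemma4p3:
  fixes \<alpha> :: real
  assumes "0 < \<alpha>" "\<alpha> < 1" "\<alpha> \<notin> \<rat>"
  shows "\<exists>K::real. \<exists>N. \<forall>n\<ge>N.
    \<bar>cf_C \<alpha> n - (\<Prod>t = 1..cf_kappa \<alpha> n.
        1 - 1 / (4 * (real t / cf_c \<alpha> n - cf_xi \<alpha> n t)\<^sup>2))\<bar>
      \<le> K / real (cf_kappa \<alpha> n)"
proof -
  interpret irrational_in_unit \<alpha> using assms by unfold_locales
  have "\<bar>cf_C \<alpha> n - (\<Prod>t = 1..cf_kappa \<alpha> n. 1 - 1 / (4 * (real t / cf_c \<alpha> n - cf_xi \<alpha> n t)\<^sup>2))\<bar>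
      \<le> 22 / real (cf_kappa \<alpha> n)" if n_ge: "66 \<le> n" for n
  proof -
    obtain m where n: "n = Suc m" using n_ge by (cases n) auto
    have "64 \<le> cf_q \<alpha> n" using cf_q_Suc_ge[of m] n_ge n by auto
    interpret sine_ratio_product "cf_q \<alpha> n" "\<bar>cf_Lambda \<alpha> n\<bar>" "cf_xi \<alpha> n"
      using \<open>64 \<le> cf_q \<alpha> n\<close> abs_cf_Lambda_Suc_pos cf_c_Suc_less_1 cf_c_Suc_eq abs_cf_xi_le cf_xi_0
        cf_xi_reflect
      by unfold_locales (simp_all add: n)
    have "cf_C \<alpha> n = (\<Prod>t = 1..cf_q \<alpha> n - 1. sqrt (factor t))"
      by (simp add: cf_C_def cf_s_def factor_def phase_def power_divide)
    moreover have "(\<Prod>t = 1..cf_kappa \<alpha> n. 1 - 1 / (4 * (real t / cf_c \<alpha> n - cf_xi \<alpha> n t)\<^sup>2))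
        = (\<Prod>t = 1..cf_kappa \<alpha> n. approx_factor t)"
      by (intro prod.cong) (simp_all add: approx_factor_def cf_c_Suc_eq[of m, folded n])
    ultimately show ?thesis
      using abs_prod_sqrt_factor_diff_le[OF \<open>64 \<le> cf_q \<alpha> n\<close>] by (simp only: cf_kappa_def)
  qed
  then show ?thesis by blast
qed

end
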